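(* Let $\mathbf{x}=x_1x_2\ldots$ be an infinite word and $n\ge1$ an integer with $r(n+1,\mathbf{x})=r(n,\mathbf{x})+1$. Let $j$ be the integer with $1\le j<r(n,\mathbf{x})-n+1$ and $x_j^{j+n-1}=x_{r(n,\mathbf{x})-n+1}^{r(n,\mathbf{x})}$. Then $x_{j+n}=x_{r(n,\mathbf{x})+1}$.
   Context: $x_i^j=x_i\cdots x_j$; $r(n,\mathbf{x})=\min\{m\ge1:\ x_i^{i+n-1}=x_{m-n+1}^{m}\text{ for some } 1\le i\le m-n\}$ (such a $j$ exists and is unique). *)

theory Defs
  imports Main
begin

text \<open>Infinite words are functions x :: nat => 'a, indexed from 1 (x 0 is ignored).
  factor_eq x i k n means x_i^{i+n-1} = x_k^{k+n-1}.\<close>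

definition factor_eq :: "(nat \<Rightarrow> 'a) \<Rightarrow> nat \<Rightarrow> nat \<Rightarrow> nat \<Rightarrow> bool" where
  "factor_eq x i k n \<longleftrightarrow> (\<forall>t<n. x (i + t) = x (k + t))"

definition rset :: "nat \<Rightarrow> (nat \<Rightarrow> 'a) \<Rightarrow> nat set" where
  "rset n x = {m. 1 \<le> m \<and> (\<exists>i. 1 \<le> i \<and> i \<le> m - n \<and> factor_eq x i (m - n + 1) n)}"

definition r :: "nat \<Rightarrow> (nat \<Rightarrow> 'a) \<Rightarrow> nat" where
  "r n x = (LEAST m. m \<in> rset n x)"

end

theory Submission
  imports Defs
begin

text \<open>By minimality of r(n,x), the length-n suffix ending at r(n,x) occurs only once strictly
  before it: a second, later occurrence would already produce an element of the set defining
  r(n,x) below r(n,x). The witness of r(n+1,x) = r(n,x) + 1 is an occurrence of the length-(n+1)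
  suffix ending at r(n,x) + 1; its first n letters form such an earlier occurrence, so it starts
  at j, and its last letter gives the claim.\<close>

lemma r_in_rset: "rset n x \<noteq> {} \<Longrightarrow> r n x \<in> rset n x"
  unfolding r_def by (meson LeastI ex_in_conv)

lemma r_le: "m \<in> rset n x \<Longrightarrow> r n x \<le> m"
  unfolding r_def by (rule Least_le)

lemma rset_gt: "m \<in> rset n x \<Longrightarrow> n < m"
  unfolding rset_def by auto

lemma factor_eq_shorter: "factor_eq x i k m \<Longrightarrow> n \<le> m \<Longrightarrow> factor_eq x i k n"
  unfolding factor_eq_def by simp

lemma factor_eq_through_common: "factor_eq x i k n \<Longrightarrow> factor_eq x j k n \<Longrightarrow> factor_eq x i j n"
  unfolding factor_eq_def by simp

lemma no_repeated_factor_before_r: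
  assumes "1 \<le> a" "a < b" "b + n \<le> r n x" "factor_eq x a b n"
  shows False
proof -
  have "b + n - 1 \<in> rset n x"
    unfolding rset_def using assms by (auto intro!: exI[of _ a])
  with r_le assms(2,3) show False by fastforce
qed

lemma earlier_occurrence_of_r_suffix_unique:
  assumes "1 \<le> i" "i < r n x - n + 1" "factor_eq x i (r n x - n + 1) n"
    and "1 \<le> j" "j < r n x - n + 1" "factor_eq x j (r n x - n + 1) n"
  shows "i = j"
proof (rule ccontr)
  assume "i \<noteq> j"
  then consider "i < j" | "j < i" by linarith
  then show False
  proof cases
    case 1
    with assms show False
      by (intro no_repeated_factor_before_r[of i j n x]) (auto intro: factor_eq_through_common)
  next
    case 2
    with assms show False
      by (intro no_repeated_factor_before_r[of j i n x]) (auto intro: factor_eq_through_common)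
  qed
qed

theorem lemma5p5:
  fixes x :: "nat \<Rightarrow> 'a" and n j :: nat
  assumes "n \<ge> 1"
    and "rset n x \<noteq> {}" and "rset (n + 1) x \<noteq> {}"
    and "r (n + 1) x = r n x + 1"
    and "1 \<le> j" and "j < r n x - n + 1"
    and "factor_eq x j (r n x - n + 1) n"
  shows "x (j + n) = x (r n x + 1)"
proof -
  define R where "R = r n x"
  have "n < R"
    unfolding R_def using assms(2) by (metis rset_gt r_in_rset)
  have "R + 1 \<in> rset (n + 1) x"
    unfolding R_def using assms(3,4) by (metis r_in_rset)
  then obtain i where i: "1 \<le> i" "i \<le> R - n" and long: "factor_eq x i (R - n + 1) (n + 1)"
    unfolding rset_def by auto
  have "factor_eq x i (R - n + 1) n"
    using long by (rule factor_eq_shorter) simp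
  with i assms(5-7) have "i = j"
    unfolding R_def by (intro earlier_occurrence_of_r_suffix_unique) auto
  moreover have "x (i + n) = x (R - n + 1 + n)"
    using long unfolding factor_eq_def by simp
  ultimately show ?thesis
    using \<open>n < R\<close> unfolding R_def by simp
qed

end
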